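(* Let $\rho$ be a symmetric probability measure on $\mathbb{R}$ with positive variance $\sigma^2$ such that $(0,0)$ belongs to the interior of $D_\Lambda=\{(u,v)\in\mathbb{R}^2:\Lambda(u,v)<+\infty\}$, where $\Lambda(u,v)=\ln\int_{\mathbb{R}}e^{uz+vz^2}\,d\rho(z)$. Then there exist $\gamma>0$ and $\delta_0\in\,]0,\sigma^2[$ such that for every $\delta\in\,]0,\delta_0]$ there is $N\ge 1$ with \[\forall n\ge N\qquad \int_{\Delta^{*}} e^{nx^2/(2y)}\mathbf{1}_{\{0<y\le\delta\}}\,d\widetilde{\nu}_{n,\rho}(x,y)\le e^{-n\gamma}.\]
   Context: $\Delta=\{(x,y)\in\mathbb{R}^2: x^2\le y\}$ and $\Delta^{*}=\Delta\setminus\{(0,0)\}$. For $n\ge1$, $\widetilde{\nu}_{n,\rho}$ denotes the law of $\left(\frac1n\sum_{i=1}^n X_i,\frac1n\sum_{i=1}^n X_i^2\right)$ where $X_1,\dots,X_n$ are i.i.d. with law $\rho$. *)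

theory Defs
  imports "HOL-Probability.Probability"
begin

definition nu_tilde :: "nat \<Rightarrow> real measure \<Rightarrow> (real \<times> real) measure" where
  "nu_tilde n \<rho> = distr (PiM {..<n} (\<lambda>_. \<rho>)) borel
     (\<lambda>X. ((\<Sum>i<n. X i) / real n, (\<Sum>i<n. (X i)^2) / real n))"

definition Delta :: "(real \<times> real) set" where
  "Delta = {(x, y). x^2 \<le> y}"

definition Delta_star :: "(real \<times> real) set" where
  "Delta_star = Delta - {(0, 0)}"

definition D_Lambda :: "real measure \<Rightarrow> (real \<times> real) set" where
  "D_Lambda \<rho> = {(u, v). (\<integral>\<^sup>+ z. ennreal (exp (u * z + v * z^2)) \<partial>\<rho>) < \<infinity>}"

end

theory Submission
  imports Defs "HOL-Real_Asymp.Real_Asymp"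
begin

text \<open>
  Write \<open>S = \<Sum> X\<^sub>i\<close>, \<open>Q = \<Sum> X\<^sub>i\<^sup>2\<close> and \<open>k\<close> for the number of nonzero \<open>X\<^sub>i\<close>.
  The integrand equals \<open>exp (S\<^sup>2 / (2Q))\<close>, and Cauchy-Schwarz over the nonzero
  coordinates gives \<open>S\<^sup>2 \<le> k Q\<close>, so it is at most \<open>exp (k/2)\<close>. On \<open>Q \<le> n\<delta>\<close> this is
  at most \<open>exp (k/2 + t(n\<delta> - Q))\<close> for every \<open>t \<ge> 0\<close>, which is the product
  \<open>\<Prod> exp (t\<delta>) w\<^sub>t(X\<^sub>i)\<close> with \<open>w\<^sub>t(0) = 1\<close> and \<open>w\<^sub>t(z) = exp (1/2 - t z\<^sup>2)\<close> otherwise.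
  Hence the integral is at most \<open>(exp (t\<delta>) \<integral> w\<^sub>t d\<rho>)\<^sup>n\<close>. As \<open>t \<rightarrow> \<infinity>\<close>,
  \<open>\<integral> w\<^sub>t d\<rho> \<rightarrow> \<rho>{0}\<close>, which is \<open>< 1\<close> because the variance is positive; so for
  one large \<open>t\<close> and all small \<open>\<delta>\<close> the base is \<open>< 1\<close>.
\<close>

definition tilt_weight :: "real \<Rightarrow> real \<Rightarrow> real" where
  "tilt_weight t z = (if z = 0 then 1 else exp (1/2 - t * z^2))"

lemma tilt_weight_measurable [measurable]: "tilt_weight t \<in> borel_measurable borel"
  unfolding tilt_weight_def by measurable

lemma tilt_weight_pos: "0 < tilt_weight t z"
  by (simp add: tilt_weight_def)

lemma tilt_weight_le: "t \<ge> 0 \<Longrightarrow> tilt_weight t z \<le> exp (1/2)"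
  by (simp add: tilt_weight_def)

lemma tilt_weight_tendsto: "(\<lambda>i. tilt_weight (real i) z) \<longlonglongrightarrow> indicator {0} z"
proof (cases "z = 0")
  case False
  then have "z^2 > 0" by simp
  then have "(\<lambda>i. exp (1/2 - real i * z^2)) \<longlonglongrightarrow> 0" by real_asymp
  with False show ?thesis by (simp add: tilt_weight_def)
qed (simp add: tilt_weight_def)

lemma measure_singleton_0_less_1:
  fixes \<rho> :: "real measure"
  assumes "prob_space \<rho>" "sets \<rho> = sets borel"
    and "prob_space.variance \<rho> (\<lambda>z. z) > 0"
  shows "measure \<rho> {0} < 1"
proof (rule ccontr)
  interpret prob_space \<rho> by fact
  assume "\<not> measure \<rho> {0} < 1"
  then have "prob {0} = 1" using prob_le_1 by (meson not_less order_antisym)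
  then have "AE z in \<rho>. z \<in> {0}" using assms(2) by (simp add: prob_eq_1)
  then have "AE z in \<rho>. z = 0" by simp
  then have "expectation (\<lambda>z. z) = 0" by (rule integral_eq_zero_AE)
  with \<open>AE z in \<rho>. z = 0\<close> have "variance (\<lambda>z. z) = 0"
    by (auto intro: integral_eq_zero_AE)
  with assms(3) show False by simp
qed

lemma integral_tilt_weight_tendsto:
  fixes \<rho> :: "real measure"
  assumes "prob_space \<rho>" "sets \<rho> = sets borel"
  shows "(\<lambda>i. integral\<^sup>L \<rho> (tilt_weight (real i))) \<longlonglongrightarrow> measure \<rho> {0}"
proof -
  interpret prob_space \<rho> by fact
  have "(\<lambda>i. integral\<^sup>L \<rho> (tilt_weight (real i))) \<longlonglongrightarrow> integral\<^sup>L \<rho> (indicator {0})"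
    using tilt_weight_le tilt_weight_pos
    by (intro integral_dominated_convergence[where w = "\<lambda>_. exp (1/2)"])
       (auto simp: measurable_cong_sets[OF assms(2) refl] tilt_weight_tendsto less_imp_le)
  then show ?thesis using assms(2) by simp
qed

lemma integral_tilt_weight_le_exp:
  fixes \<rho> :: "real measure"
  assumes "prob_space \<rho>" "sets \<rho> = sets borel"
    and "prob_space.variance \<rho> (\<lambda>z. z) > 0"
  obtains t c where "t \<ge> 0" "c > 0" "integral\<^sup>L \<rho> (tilt_weight t) \<le> exp (- c)"
proof -
  define p where "p = measure \<rho> {0}"
  have "p < 1" "0 \<le> p" unfolding p_def using measure_singleton_0_less_1[OF assms] by simp_all
  then have "p < (1 + p) / 2" "(1 + p) / 2 < 1" "0 < (1 + p) / 2" by simp_all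
  then obtain i where "integral\<^sup>L \<rho> (tilt_weight (real i)) < (1 + p) / 2"
    using order_tendstoD(2)[OF integral_tilt_weight_tendsto[OF assms(1,2)], of "(1 + p) / 2"]
    by (auto simp: p_def eventually_sequentially)
  with \<open>(1 + p) / 2 < 1\<close> \<open>0 < (1 + p) / 2\<close> show thesis
    by (intro that[of "real i" "- ln ((1 + p) / 2)"]) simp_all
qed

lemma square_sum_le_card_nonzero_mult_sum_squares:
  fixes X :: "'a \<Rightarrow> real"
  assumes "finite I"
  shows "(\<Sum>i\<in>I. X i)^2 \<le> card {i\<in>I. X i \<noteq> 0} * (\<Sum>i\<in>I. (X i)^2)"
proof -
  have "(\<Sum>i\<in>I. X i) = (\<Sum>i\<in>{i\<in>I. X i \<noteq> 0}. X i)"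
    and "(\<Sum>i\<in>I. (X i)^2) = (\<Sum>i\<in>{i\<in>I. X i \<noteq> 0}. (X i)^2)"
    using assms by (auto intro: sum.mono_neutral_right)
  then show ?thesis using sum_squared_le_sum_of_squares[of X "{i\<in>I. X i \<noteq> 0}"]
    by (simp add: mult.commute)
qed

lemma empirical_integrand_le_prod_tilt_weight:
  fixes X :: "nat \<Rightarrow> real"
  assumes "n > 0" "t \<ge> 0"
  defines "p \<equiv> ((\<Sum>i<n. X i) / real n, (\<Sum>i<n. (X i)^2) / real n)"
  shows "ennreal (exp (real n * (fst p)^2 / (2 * snd p)))
       * indicator Delta_star p * indicator {p. 0 < snd p \<and> snd p \<le> \<delta>} p
     \<le> (\<Prod>i<n. ennreal (exp (t * \<delta>) * tilt_weight t (X i)))"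
proof (cases "0 < snd p \<and> snd p \<le> \<delta>")
  case True
  define S where "S = (\<Sum>i<n. X i)"
  define Q where "Q = (\<Sum>i<n. (X i)^2)"
  define k where "k = card {i\<in>{..<n}. X i \<noteq> 0}"
  have "0 < Q" "Q \<le> real n * \<delta>"
    using True assms(1) by (auto simp: p_def Q_def field_simps)
  have exponent: "real n * (fst p)^2 / (2 * snd p) = S^2 / (2 * Q)"
    using assms(1) by (simp add: p_def S_def Q_def field_simps power2_eq_square)
  have "S^2 / (2 * Q) \<le> k / 2"
    using square_sum_le_card_nonzero_mult_sum_squares[of "{..<n}" X] \<open>0 < Q\<close>
    by (simp add: S_def Q_def k_def field_simps)
  also have "\<dots> \<le> real n * t * \<delta> + k / 2 - t * Q"
    using mult_left_mono[OF \<open>Q \<le> real n * \<delta>\<close> assms(2)] by (simp add: algebra_simps)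
  also have "\<dots> = (\<Sum>i<n. t * \<delta> + ((if X i = 0 then 0 else 1/2) - t * (X i)^2))"
    by (simp add: sum.distrib sum_subtractf sum_distrib_left Q_def k_def sum.If_cases
                  Int_def conj_commute)
  also have "exp \<dots> = (\<Prod>i<n. exp (t * \<delta>) * tilt_weight t (X i))"
    by (subst exp_sum) (auto intro!: prod.cong simp: exp_add tilt_weight_def)
  finally have "exp (S^2 / (2 * Q)) \<le> (\<Prod>i<n. exp (t * \<delta>) * tilt_weight t (X i))"
    by simp
  then show ?thesis
    using True by (auto simp: exponent prod_ennreal tilt_weight_pos less_imp_le indicator_def
                        intro!: ennreal_leI)
qed (auto simp: indicator_def)

lemma empirical_integrand_measurable:
  "(\<lambda>p. ennreal (exp (real n * (fst p)^2 / (2 * snd p)))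
       * indicator Delta_star p * indicator {p. 0 < snd p \<and> snd p \<le> (\<delta>::real)} p)
     \<in> borel_measurable borel"
proof -
  have Delta_eq: "Delta = {p. fst p ^ 2 \<le> snd p}" by (auto simp: Delta_def)
  have "Delta \<in> sets borel"
    unfolding Delta_eq by (intro borel_closed closed_Collect_le continuous_intros)
  then have "Delta_star \<in> sets borel" unfolding Delta_star_def by auto
  note this[unfolded borel_prod[symmetric], measurable]
  show ?thesis unfolding borel_prod[symmetric] by measurable
qed

lemma nn_integral_nu_tilde_le_power:
  fixes \<rho> :: "real measure"
  assumes "prob_space \<rho>" "sets \<rho> = sets borel" "n > 0" "t \<ge> 0"
  shows "(\<integral>\<^sup>+ p. ennreal (exp (real n * (fst p)^2 / (2 * snd p)))
             * indicator Delta_star p * indicator {p. 0 < snd p \<and> snd p \<le> \<delta>} p \<partial>nu_tilde n \<rho>)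
         \<le> ennreal (exp (t * \<delta>) * integral\<^sup>L \<rho> (tilt_weight t)) ^ n"
proof -
  interpret prob_space \<rho> by fact
  interpret product_sigma_finite "\<lambda>_::nat. \<rho>" by unfold_locales
  have sets_cong: "measurable \<rho> = measurable borel"
    by (intro ext measurable_cong_sets assms(2) refl)
  have empirical_pair: "(\<lambda>X. ((\<Sum>i<n. X i) / real n, (\<Sum>i<n. (X i)^2) / real n))
      \<in> borel_measurable (PiM {..<n} (\<lambda>_. \<rho>))"
    by (subst measurable_cong_sets[OF sets_PiM_cong[OF refl assms(2)] refl]) measurable
  have weight_integral: "(\<integral>\<^sup>+ z. ennreal (exp (t * \<delta>) * tilt_weight t z) \<partial>\<rho>)
      = ennreal (exp (t * \<delta>) * integral\<^sup>L \<rho> (tilt_weight t))"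
    using tilt_weight_pos tilt_weight_le[OF assms(4)]
    by (subst nn_integral_eq_integral)
       (auto intro!: integrable_mult_right integrable_const_bound[where B = "exp (1/2)"]
             simp: sets_cong less_imp_le)
  have "(\<integral>\<^sup>+ p. ennreal (exp (real n * (fst p)^2 / (2 * snd p)))
             * indicator Delta_star p * indicator {p. 0 < snd p \<and> snd p \<le> \<delta>} p \<partial>nu_tilde n \<rho>)
      \<le> (\<integral>\<^sup>+ X. (\<Prod>i<n. ennreal (exp (t * \<delta>) * tilt_weight t (X i))) \<partial>PiM {..<n} (\<lambda>_. \<rho>))"
    unfolding nu_tilde_def
    using empirical_integrand_le_prod_tilt_weight[OF assms(3,4)]
    by (subst nn_integral_distr[OF empirical_pair])
       (simp_all add: empirical_integrand_measurable nn_integral_mono)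
  also have "\<dots> = (\<Prod>i<n. \<integral>\<^sup>+ z. ennreal (exp (t * \<delta>) * tilt_weight t z) \<partial>\<rho>)"
    by (rule product_nn_integral_prod) (simp_all add: sets_cong)
  finally show ?thesis by (simp add: weight_integral)
qed

lemma nn_integral_nu_tilde_le_exp:
  fixes \<rho> :: "real measure"
  assumes "prob_space \<rho>" "sets \<rho> = sets borel" "n > 0" "t \<ge> 0"
    and weight: "integral\<^sup>L \<rho> (tilt_weight t) \<le> exp (- c)" and "t * \<delta> \<le> c / 2"
  shows "(\<integral>\<^sup>+ p. ennreal (exp (real n * (fst p)^2 / (2 * snd p)))
             * indicator Delta_star p * indicator {p. 0 < snd p \<and> snd p \<le> \<delta>} p \<partial>nu_tilde n \<rho>)
         \<le> ennreal (exp (- real n * (c / 2)))"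
proof -
  have "exp (t * \<delta>) * integral\<^sup>L \<rho> (tilt_weight t) \<le> exp (t * \<delta>) * exp (- c)"
    using weight by simp
  also have "\<dots> \<le> exp (c / 2) * exp (- c)"
    using \<open>t * \<delta> \<le> c / 2\<close> by simp
  also have "\<dots> = exp (- (c / 2))" by (simp flip: exp_add)
  finally have "ennreal (exp (t * \<delta>) * integral\<^sup>L \<rho> (tilt_weight t)) ^ n \<le> ennreal (exp (- (c / 2))) ^ n"
    by (intro power_mono ennreal_leI) auto
  also have "\<dots> = ennreal (exp (- real n * (c / 2)))"
    by (simp add: ennreal_power exp_of_nat_mult[symmetric])
  finally show ?thesis
    using nn_integral_nu_tilde_le_power[OF assms(1-4)] by (rule order_trans[rotated])
qed

theorem proposition4:
  fixes \<rho> :: "real measure"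
  assumes "prob_space \<rho>"
    and "sets \<rho> = sets borel"
    and "distr \<rho> borel uminus = \<rho>"
    and "prob_space.variance \<rho> (\<lambda>z. z) > 0"
    and "(0, 0) \<in> interior (D_Lambda \<rho>)"
  shows "\<exists>\<gamma>>0. \<exists>\<delta>0. 0 < \<delta>0 \<and> \<delta>0 < prob_space.variance \<rho> (\<lambda>z. z) \<and>
    (\<forall>\<delta>. 0 < \<delta> \<and> \<delta> \<le> \<delta>0 \<longrightarrow>
      (\<exists>N\<ge>1. \<forall>n\<ge>N.
        (\<integral>\<^sup>+ p. ennreal (exp (real n * (fst p)^2 / (2 * snd p)))
              * indicator Delta_star p * indicator {p. 0 < snd p \<and> snd p \<le> \<delta>} p
           \<partial>nu_tilde n \<rho>) \<le> ennreal (exp (- real n * \<gamma>))))"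
proof -
  obtain t c where "t \<ge> 0" "c > 0" and weight: "integral\<^sup>L \<rho> (tilt_weight t) \<le> exp (- c)"
    using integral_tilt_weight_le_exp[OF assms(1,2,4)] .
  define \<delta>0 where "\<delta>0 = min (prob_space.variance \<rho> (\<lambda>z. z) / 2) (c / (2 * (t + 1)))"
  have "0 < \<delta>0" "\<delta>0 < prob_space.variance \<rho> (\<lambda>z. z)"
    using assms(4) \<open>t \<ge> 0\<close> \<open>c > 0\<close> by (auto simp: \<delta>0_def)
  moreover have "t * \<delta> \<le> c / 2" if "0 < \<delta>" "\<delta> \<le> \<delta>0" for \<delta>
    using mult_left_mono[of \<delta> "c / (2 * (t + 1))" t] that \<open>t \<ge> 0\<close> \<open>c > 0\<close>
    by (simp add: \<delta>0_def field_simps)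
  ultimately show ?thesis
    using \<open>c > 0\<close> nn_integral_nu_tilde_le_exp[OF assms(1,2) _ \<open>t \<ge> 0\<close> weight]
    by (intro exI[of _ "c / 2"] exI[of _ \<delta>0] conjI allI impI exI[of _ 1]) auto
qed

end
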